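(* For any $\varepsilon,\alpha\in(0,1)$ and any $\beta>0$, if $G=(V,E)$ is a finite graph and $\mathcal{P}'$ is a partition of $V$, then there exists an $(\varepsilon,\alpha,\beta)$-good coarsening of $\mathcal{P}'$.
   Context: A partition $\mathcal{P}$ is a coarsening of $\mathcal{P}'$ if every set of $\mathcal{P}$ is a union of sets of $\mathcal{P}'$. Let $\mathcal{P}'$ be $V=V'_1\sqcup\dots\sqcup V'_\ell$ and $\mathcal{P}$, given by $V=V_1\sqcup\dots\sqcup V_k$, a coarsening of it; for $i\in[k]$, $\mathcal{P}_i$ is the partition of $V_i$ into sets of $\mathcal{P}'$. For a partition $\mathcal{Q}$ of a vertex set into sets $U_1,\dots,U_m$ and $c>0$, $H(\mathcal{Q},c)$ is the graph on $[m]$ where $j\ne j'$ are adjacent iff $|E(U_j,U_{j'})|>c$, with $E(A,B)$ the set of edges of $G$ between $A$ and $B$. $\mathcal{P}$ is an $(\varepsilon,\alpha,\beta)$-good coarsening of $\mathcal{P}'$ if there exists $\theta\in\left[\varepsilon\left(\frac{\varepsilon\alpha}{\ell^2}\right)^{2^\ell},\varepsilon\right]$ such that (1) for every $i\in[k]$, $H(\mathcal{P}_i,\theta\beta)$ is connected; (2) for every $i\in[k]$, $|E(V_i,V\setminus V_i)|\le\theta^2\beta\alpha$. *)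

theory Defs
  imports Complex_Main "HOL-Library.Disjoint_Sets"
begin

definition finite_graph :: "'a set \<Rightarrow> 'a set set \<Rightarrow> bool" where
  "finite_graph V E \<longleftrightarrow> finite V \<and> (\<forall>e\<in>E. \<exists>x y. x \<in> V \<and> y \<in> V \<and> x \<noteq> y \<and> e = {x, y})"

definition edges_between :: "'a set set \<Rightarrow> 'a set \<Rightarrow> 'a set \<Rightarrow> 'a set set" where
  "edges_between E A B = {e \<in> E. \<exists>a\<in>A. \<exists>b\<in>B. e = {a, b}}"

definition coarsening :: "'a set \<Rightarrow> 'a set set \<Rightarrow> 'a set set \<Rightarrow> bool" where
  "coarsening V P P' \<longleftrightarrow> partition_on V P \<and> partition_on V P' \<and>
     (\<forall>X\<in>P. \<exists>S. S \<subseteq> P' \<and> X = \<Union>S)"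

definition induced_part :: "'a set set \<Rightarrow> 'a set \<Rightarrow> 'a set set" where
  "induced_part P' X = {Y \<in> P'. Y \<subseteq> X}"

definition H_adj :: "'a set set \<Rightarrow> 'a set set \<Rightarrow> real \<Rightarrow> ('a set \<times> 'a set) set" where
  "H_adj E Q c = {(U, W). U \<in> Q \<and> W \<in> Q \<and> U \<noteq> W \<and> real (card (edges_between E U W)) > c}"

definition H_connected :: "'a set set \<Rightarrow> 'a set set \<Rightarrow> real \<Rightarrow> bool" where
  "H_connected E Q c \<longleftrightarrow> (\<forall>U\<in>Q. \<forall>W\<in>Q. (U, W) \<in> (H_adj E Q c)\<^sup>*)"

definition good_coarsening ::
  "real \<Rightarrow> real \<Rightarrow> real \<Rightarrow> 'a set \<Rightarrow> 'a set set \<Rightarrow> 'a set set \<Rightarrow> 'a set set \<Rightarrow> bool" where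
  "good_coarsening \<epsilon> \<alpha> \<beta> V E P P' \<longleftrightarrow> coarsening V P P' \<and>
     (\<exists>\<theta>::real. \<epsilon> * (\<epsilon> * \<alpha> / (real (card P'))\<^sup>2) ^ (2 ^ card P') \<le> \<theta> \<and> \<theta> \<le> \<epsilon> \<and>
        (\<forall>X\<in>P. H_connected E (induced_part P' X) (\<theta> * \<beta>)) \<and>
        (\<forall>X\<in>P. real (card (edges_between E X (V - X))) \<le> \<theta>\<^sup>2 * \<beta> * \<alpha>))"

end

theory Submission
  imports Defs
begin

text \<open>
  Put \<open>\<theta>\<^sub>0 = \<epsilon>\<close>, \<open>\<theta>\<^sub>i\<^sub>+\<^sub>1 = \<theta>\<^sub>i\<^sup>2 \<alpha> / \<ell>\<^sup>2\<close> and group the blocks of \<open>\<P>'\<close> into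
  the connected components of \<open>H(\<P>', \<theta>\<^sub>i \<beta>)\<close>. Lowering the threshold can only merge
  components, and there are at most \<open>\<ell>\<close> of them, so for some \<open>i \<le> \<ell>\<close> the thresholds
  \<open>\<theta> = \<theta>\<^sub>i\<close> and \<open>\<theta>\<^sub>i\<^sub>+\<^sub>1\<close> give the same components. Let \<open>\<P>\<close> consist of the unions of
  these components. Each of them is connected in \<open>H(\<P>', \<theta>\<beta>)\<close> by construction, and two
  blocks on different sides of a cut are not adjacent in \<open>H(\<P>', \<theta>\<^sub>i\<^sub>+\<^sub>1 \<beta>)\<close>, so the
  at most \<open>\<ell>\<^sup>2\<close> such pairs carry at most \<open>\<ell>\<^sup>2 \<theta>\<^sub>i\<^sub>+\<^sub>1 \<beta> = \<theta>\<^sup>2 \<beta> \<alpha>\<close> edges.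
  The closed form \<open>\<theta>\<^sub>i = \<epsilon>\<^bsup>2\<^sup>i\<^esup> (\<alpha>/\<ell>\<^sup>2)\<^bsup>2\<^sup>i - 1\<^esup>\<close> gives the lower bound on \<open>\<theta>\<close>.
\<close>

definition threshold :: "real \<Rightarrow> real \<Rightarrow> nat \<Rightarrow> real" where
  "threshold \<epsilon> c i = \<epsilon> ^ 2 ^ i * c ^ (2 ^ i - 1)"

lemma threshold_Suc: "threshold \<epsilon> c (Suc i) = (threshold \<epsilon> c i)\<^sup>2 * c"
proof -
  have "(2::nat) ^ Suc i - 1 = (2 ^ i - 1) * 2 + 1"
    using one_le_power[of "2::nat" i] by (simp only: power_Suc) linarith
  then show ?thesis
    unfolding threshold_def
    by (simp only: power_add power_mult power_one_right power_mult_distrib power_Suc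
        mult.commute[of 2 "2 ^ i"])
qed

lemma threshold_bounds:
  assumes "0 \<le> \<epsilon>" "\<epsilon> \<le> 1" "0 \<le> c" "c \<le> 1" "i \<le> n"
  shows "\<epsilon> * (\<epsilon> * c) ^ 2 ^ n \<le> threshold \<epsilon> c i" "threshold \<epsilon> c i \<le> \<epsilon>"
proof -
  have exponents: "(2::nat) ^ i \<le> 2 ^ n" using assms(5) by simp
  have "\<epsilon> ^ (2 ^ n + 1) \<le> \<epsilon> ^ 2 ^ i" "c ^ 2 ^ n \<le> c ^ (2 ^ i - 1)"
    by (rule power_decreasing; use exponents assms(1-4) in linarith)+
  then have "\<epsilon> ^ (2 ^ n + 1) * c ^ 2 ^ n \<le> threshold \<epsilon> c i"
    unfolding threshold_def using assms(1,3) by (intro mult_mono) auto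
  then show "\<epsilon> * (\<epsilon> * c) ^ 2 ^ n \<le> threshold \<epsilon> c i"
    by (simp add: power_mult_distrib mult_ac)
  have "\<epsilon> ^ 2 ^ i \<le> \<epsilon>" "c ^ (2 ^ i - 1) \<le> 1"
    using assms(1-4) power_decreasing[of 1 "2 ^ i" \<epsilon>] by (auto intro: power_le_one)
  then show "threshold \<epsilon> c i \<le> \<epsilon>"
    unfolding threshold_def using mult_mono[OF _ _ assms(1)] assms(3) by fastforce
qed

lemma threshold_nonneg: "0 \<le> \<epsilon> \<Longrightarrow> 0 \<le> c \<Longrightarrow> 0 \<le> threshold \<epsilon> c i"
  by (simp add: threshold_def)

lemma threshold_Suc_le:
  assumes "0 \<le> \<epsilon>" "\<epsilon> \<le> 1" "0 \<le> c" "c \<le> 1"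
  shows "threshold \<epsilon> c (Suc i) \<le> threshold \<epsilon> c i"
proof -
  let ?\<theta> = "threshold \<epsilon> c i"
  have "0 \<le> ?\<theta>" "?\<theta> \<le> 1"
    using assms threshold_nonneg threshold_bounds(2)[of \<epsilon> c i i] by auto
  then have "?\<theta> * (?\<theta> * c) \<le> ?\<theta>"
    using assms(3,4) by (simp add: mult_le_one mult_left_le)
  then show ?thesis by (simp add: threshold_Suc power2_eq_square mult.assoc)
qed

lemma divide_nat_square_le_1:
  assumes "\<alpha> \<le> 1"
  shows "\<alpha> / (real l)\<^sup>2 \<le> 1"
proof (cases "l = 0")
  case False
  then have "1 \<le> (real l)\<^sup>2" by simp
  with assms show ?thesis by (simp add: divide_le_eq)
qed simp

lemma scaled_threshold_Suc_le:
  assumes "0 \<le> \<alpha>"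
  shows "(real l)\<^sup>2 * threshold \<epsilon> (\<alpha> / (real l)\<^sup>2) (Suc i)
    \<le> (threshold \<epsilon> (\<alpha> / (real l)\<^sup>2) i)\<^sup>2 * \<alpha>"
proof (cases "l = 0")
  case False
  then show ?thesis by (simp add: threshold_Suc)
qed (simp add: assms)

definition H_component_rel :: "'a set set \<Rightarrow> 'a set set \<Rightarrow> real \<Rightarrow> ('a set \<times> 'a set) set" where
  "H_component_rel E Q c = {(U, W). U \<in> Q \<and> W \<in> Q \<and> (U, W) \<in> (H_adj E Q c)\<^sup>*}"

lemma edges_between_commute: "edges_between E U W = edges_between E W U"
  by (auto simp: edges_between_def insert_commute)

lemma sym_H_adj: "sym (H_adj E Q c)"
  by (auto simp: H_adj_def sym_def edges_between_commute)

lemma equiv_H_component_rel: "equiv Q (H_component_rel E Q c)"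
proof (rule equivI)
  show "H_component_rel E Q c \<subseteq> Q \<times> Q"
    by (auto simp: H_component_rel_def)
  show "refl_on Q (H_component_rel E Q c)"
    by (auto simp: refl_on_def H_component_rel_def)
  show "sym (H_component_rel E Q c)"
    using sym_rtrancl[OF sym_H_adj[of E Q c]] unfolding sym_def H_component_rel_def by blast
  show "trans (H_component_rel E Q c)"
    by (auto simp: trans_def H_component_rel_def)
qed

lemma H_component_rel_antimono:
  assumes "c' \<le> c"
  shows "H_component_rel E Q c \<subseteq> H_component_rel E Q c'"
proof -
  have "H_adj E Q c \<subseteq> H_adj E Q c'" using assms by (auto simp: H_adj_def)
  then show ?thesis by (auto simp: H_component_rel_def dest: rtrancl_mono)
qed

lemma H_adj_subset_H_component_rel: "H_adj E Q c \<subseteq> H_component_rel E Q c"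
  by (auto simp: H_component_rel_def H_adj_def)

lemma H_connected_H_component:
  assumes C: "C \<in> Q // H_component_rel E Q c"
  shows "H_connected E C c"
  unfolding H_connected_def
proof (intro ballI)
  fix U W assume "U \<in> C" "W \<in> C"
  have closed: "Z \<in> C" if "Y \<in> C" "(Y, Z) \<in> H_adj E Q c" for Y Z
    using in_quotient_imp_closed[OF equiv_H_component_rel C] that H_adj_subset_H_component_rel
    by blast
  have "(U, W) \<in> (H_adj E Q c)\<^sup>*"
    using in_quotient_imp_in_rel[OF equiv_H_component_rel C] \<open>U \<in> C\<close> \<open>W \<in> C\<close>
    by (auto simp: H_component_rel_def)
  then have "(U, W) \<in> (H_adj E C c)\<^sup>* \<and> W \<in> C"
  proof (induction rule: rtrancl_induct)
    case base
    show ?case using \<open>U \<in> C\<close> by simp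
  next
    case (step Y Z)
    then have "Z \<in> C" using closed by blast
    with step have "(Y, Z) \<in> H_adj E C c" by (auto simp: H_adj_def)
    with step \<open>Z \<in> C\<close> show ?case by (meson rtrancl.rtrancl_into_rtrancl)
  qed
  then show "(U, W) \<in> (H_adj E C c)\<^sup>*" ..
qed

lemma card_quotient_le: "finite A \<Longrightarrow> card (A // R) \<le> card A"
  unfolding quotient_def by (metis UNION_singleton_eq_range card_image_le)

lemma card_quotient_less:
  assumes "finite A" "equiv A R" "equiv A S" "R \<subset> S"
  shows "card (A // S) < card (A // R)"
proof -
  obtain a b where ab: "(a, b) \<in> S" "(a, b) \<notin> R" using assms(4) by auto
  then have A: "a \<in> A" "b \<in> A" using assms(3) by (auto dest: equiv_type)
  have "R `` {a} \<noteq> R `` {b}" "S `` (R `` {a}) = S `` (R `` {b})"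
    using ab eq_equiv_class_iff[OF assms(2) A] eq_equiv_class_iff[OF assms(3) A]
      refines_equiv_class_eq2[OF _ assms(2,3)] assms(4) by auto
  moreover have "R `` {a} \<in> A // R" "R `` {b} \<in> A // R" using A by (auto intro: quotientI)
  ultimately have "\<not> inj_on (\<lambda>X. S `` X) (A // R)" unfolding inj_on_def by blast
  moreover have "finite (A // R)"
    using finite_quotient[OF assms(1)] assms(2) by (auto dest: equiv_type)
  ultimately have "card ((\<lambda>X. S `` X) ` (A // R)) < card (A // R)"
    using card_image_le inj_on_iff_eq_card le_neq_implies_less by metis
  then show ?thesis
    using refines_equiv_image_eq[OF _ assms(2,3)] assms(4) by simp
qed

lemma increasing_equiv_chain_stabilises:
  assumes "finite A" "\<And>i. equiv A (R i)" "\<And>i. R i \<subseteq> R (Suc i)"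
  obtains i where "i \<le> card A" "R i = R (Suc i)"
proof (rule ccontr)
  assume "\<not> thesis"
  with that have strict: "R i \<subset> R (Suc i)" if "i \<le> card A" for i
    using assms(3) that by blast
  have "card (A // R i) + i \<le> card A" if "i \<le> Suc (card A)" for i
    using that
  proof (induction i)
    case 0
    show ?case using card_quotient_le[OF assms(1)] by simp
  next
    case (Suc i)
    have "card (A // R (Suc i)) < card (A // R i)"
      using Suc.prems strict card_quotient_less[OF assms(1,2,2)] by simp
    with Suc show ?case by simp
  qed
  from this[of "Suc (card A)"] show False by simp
qed

lemma partition_on_block_eq:
  assumes "partition_on A P" "X \<in> P" "Y \<in> P" "x \<in> X" "x \<in> Y"
  shows "X = Y"
  using disjointD[OF partition_onD2[OF assms(1)] assms(2,3)] assms(4,5) by blast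

lemma partition_on_Union_image:
  assumes V: "partition_on V P" and Q: "partition_on P Q"
  shows "partition_on V (Union ` Q)"
proof (rule partition_onI)
  have "\<Union> (Union ` Q) = \<Union> (\<Union> Q)" by blast
  then show "\<Union> (Union ` Q) = V"
    using partition_onD1[OF V] partition_onD1[OF Q] by simp
  show "{} \<notin> Union ` Q"
  proof
    assume "{} \<in> Union ` Q"
    then obtain C where C: "C \<in> Q" "\<Union> C = {}" by (metis imageE)
    then obtain Y where "Y \<in> C" using partition_onD3[OF Q] by fastforce
    then have "Y \<in> P" "Y = {}" using C partition_onD1[OF Q] by auto
    then show False using partition_onD3[OF V] by simp
  qed
  fix X Y assume "X \<in> Union ` Q" "Y \<in> Union ` Q" "X \<noteq> Y"
  then obtain C D where CD: "C \<in> Q" "D \<in> Q" "X = \<Union> C" "Y = \<Union> D" by auto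
  show "disjnt X Y"
  proof (rule ccontr)
    assume "\<not> disjnt X Y"
    then obtain x U W where "x \<in> U" "U \<in> C" "x \<in> W" "W \<in> D"
      using CD(3,4) by (auto simp: disjnt_def)
    moreover have "C \<subseteq> P" "D \<subseteq> P" using partition_onD1[OF Q] CD(1,2) by auto
    ultimately have "U = W" by (intro partition_on_block_eq[OF V]) auto
    with \<open>W \<in> D\<close> have "U \<in> D" by simp
    then have "C = D" using partition_on_block_eq[OF Q CD(1,2) \<open>U \<in> C\<close>] by simp
    with CD \<open>X \<noteq> Y\<close> show False by simp
  qed
qed

lemma induced_part_Union:
  assumes "partition_on V P" "C \<subseteq> P"
  shows "induced_part P (\<Union> C) = C"
proof
  show "C \<subseteq> induced_part P (\<Union> C)"
    using assms(2) by (auto simp: induced_part_def)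
  show "induced_part P (\<Union> C) \<subseteq> C"
  proof
    fix Y assume "Y \<in> induced_part P (\<Union> C)"
    then have Y: "Y \<in> P" "Y \<subseteq> \<Union> C" by (auto simp: induced_part_def)
    then obtain a where "a \<in> Y" using partition_onD3[OF assms(1)] by fastforce
    then obtain Z where "Z \<in> C" "a \<in> Z" using Y by blast
    then have "Y = Z" using partition_on_block_eq[OF assms(1) Y(1)] assms(2) \<open>a \<in> Y\<close> by blast
    with \<open>Z \<in> C\<close> show "Y \<in> C" by simp
  qed
qed

lemma coarsening_Union_quotient:
  assumes "partition_on V P" "equiv P R"
  shows "coarsening V (Union ` (P // R)) P"
  unfolding coarsening_def
  using partition_on_Union_image[OF assms(1) partition_on_quotient[OF assms(2)]] assms
    in_quotient_imp_subset[OF assms(2)] by blast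

lemma card_edges_between_Union_le:
  assumes "finite C" "finite D"
    and "\<And>Y Z. Y \<in> C \<Longrightarrow> Z \<in> D \<Longrightarrow> real (card (edges_between E Y Z)) \<le> t"
  shows "real (card (edges_between E (\<Union> C) (\<Union> D))) \<le> real (card C * card D) * t"
proof -
  have "edges_between E (\<Union> C) (\<Union> D) = (\<Union>(Y, Z) \<in> C \<times> D. edges_between E Y Z)"
    by (auto simp: edges_between_def)
  then have "card (edges_between E (\<Union> C) (\<Union> D)) \<le> (\<Sum>(Y, Z) \<in> C \<times> D. card (edges_between E Y Z))"
    using card_UN_le[of "C \<times> D"] assms(1,2) by (simp add: case_prod_beta)
  then have "real (card (edges_between E (\<Union> C) (\<Union> D)))
      \<le> (\<Sum>(Y, Z) \<in> C \<times> D. real (card (edges_between E Y Z)))"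
    by (simp add: case_prod_beta flip: of_nat_sum)
  also have "\<dots> \<le> (\<Sum>(Y, Z) \<in> C \<times> D. t)"
    using assms(3) by (intro sum_mono) auto
  finally show ?thesis by (simp add: card_cartesian_product)
qed

lemma card_cut_H_component_le:
  assumes V: "partition_on V Q" "finite Q"
    and C: "C \<in> Q // H_component_rel E Q t"
    and stable: "H_component_rel E Q t' \<subseteq> H_component_rel E Q t" and "0 \<le> t'"
  shows "real (card (edges_between E (\<Union> C) (V - \<Union> C))) \<le> (real (card Q))\<^sup>2 * t'"
proof -
  have CQ: "C \<subseteq> Q" using in_quotient_imp_subset[OF equiv_H_component_rel C] .
  have "V - \<Union> C = \<Union> (Q - C)"
    using diff_Union_pairwise_disjoint[OF partition_onD2[OF V(1)] CQ] partition_onD1[OF V(1)]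
    by simp
  moreover have "real (card (edges_between E Y Z)) \<le> t'" if "Y \<in> C" "Z \<in> Q - C" for Y Z
  proof -
    have "(Y, Z) \<notin> H_adj E Q t'"
      using that in_quotient_imp_closed[OF equiv_H_component_rel C] stable
        H_adj_subset_H_component_rel by blast
    with that CQ show ?thesis by (auto simp: H_adj_def)
  qed
  moreover have "finite C" "finite (Q - C)" using V(2) CQ finite_subset by auto
  ultimately have "real (card (edges_between E (\<Union> C) (V - \<Union> C)))
      \<le> real (card C * card (Q - C)) * t'"
    using card_edges_between_Union_le[of C "Q - C" E t'] by simp
  also have "\<dots> \<le> (real (card Q))\<^sup>2 * t'"
  proof (rule mult_right_mono)
    have "card C * card (Q - C) \<le> card Q * card Q"
      using CQ V(2) by (intro mult_le_mono card_mono) auto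
    then show "real (card C * card (Q - C)) \<le> (real (card Q))\<^sup>2"
      by (simp add: power2_eq_square flip: of_nat_mult)
  qed fact
  finally show ?thesis .
qed

lemma good_coarsening_H_components:
  assumes "partition_on V Q" "finite Q"
    and stable: "H_component_rel E Q (\<theta>' * \<beta>) \<subseteq> H_component_rel E Q (\<theta> * \<beta>)"
    and "0 \<le> \<theta>'" "(real (card Q))\<^sup>2 * \<theta>' \<le> \<theta>\<^sup>2 * \<alpha>" "0 \<le> \<beta>"
    and "\<epsilon> * (\<epsilon> * \<alpha> / (real (card Q))\<^sup>2) ^ 2 ^ card Q \<le> \<theta>" "\<theta> \<le> \<epsilon>"
  defines "P \<equiv> Union ` (Q // H_component_rel E Q (\<theta> * \<beta>))"
  shows "good_coarsening \<epsilon> \<alpha> \<beta> V E P Q"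
proof -
  have "coarsening V P Q"
    unfolding P_def using assms(1) equiv_H_component_rel by (rule coarsening_Union_quotient)
  moreover have "H_connected E (induced_part Q X) (\<theta> * \<beta>)
      \<and> real (card (edges_between E X (V - X))) \<le> \<theta>\<^sup>2 * \<beta> * \<alpha>" if "X \<in> P" for X
  proof
    obtain C where C: "C \<in> Q // H_component_rel E Q (\<theta> * \<beta>)" "X = \<Union> C"
      using \<open>X \<in> P\<close> unfolding P_def by blast
    then have "C \<subseteq> Q" by (simp add: in_quotient_imp_subset[OF equiv_H_component_rel])
    then have "induced_part Q X = C" unfolding C(2) by (rule induced_part_Union[OF assms(1)])
    with C(1) show "H_connected E (induced_part Q X) (\<theta> * \<beta>)"
      by (simp add: H_connected_H_component)
    have "real (card (edges_between E X (V - X))) \<le> (real (card Q))\<^sup>2 * (\<theta>' * \<beta>)"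
      unfolding C(2) using C(1) stable
    proof (rule card_cut_H_component_le[OF assms(1,2)])
      show "0 \<le> \<theta>' * \<beta>" using assms(4,6) by simp
    qed
    also have "\<dots> \<le> \<theta>\<^sup>2 * \<alpha> * \<beta>"
      using assms(5,6) by (simp only: mult.assoc[symmetric] mult_right_mono)
    finally show "real (card (edges_between E X (V - X))) \<le> \<theta>\<^sup>2 * \<beta> * \<alpha>"
      by (simp only: mult_ac)
  qed
  ultimately show ?thesis
    unfolding good_coarsening_def using assms(7,8) by blast
qed

theorem lemma2p13:
  fixes \<epsilon> \<alpha> \<beta> :: real and V :: "'a set" and E :: "'a set set" and P' :: "'a set set"
  assumes "0 < \<epsilon>" "\<epsilon> < 1" "0 < \<alpha>" "\<alpha> < 1" "0 < \<beta>"
    and "finite_graph V E"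
    and "partition_on V P'"
  shows "\<exists>P. good_coarsening \<epsilon> \<alpha> \<beta> V E P P'"
proof -
  define l where "l = card P'"
  define c where "c = \<alpha> / (real l)\<^sup>2"
    \<comment> \<open>\<open>c = 0\<close> if \<open>P' = {}\<close>, a case that then needs no separate treatment\<close>
  define \<theta> where "\<theta> = threshold \<epsilon> c"
  define R where "R i = H_component_rel E P' (\<theta> i * \<beta>)" for i
  have finite: "finite P'"
    using assms(6,7) finite_elements by (auto simp: finite_graph_def)
  have c: "0 \<le> c" "c \<le> 1"
    using assms(3,4) divide_nat_square_le_1[of \<alpha> l] by (simp_all add: c_def)
  have equiv: "equiv P' (R i)" for i
    unfolding R_def by (rule equiv_H_component_rel)
  have chain: "R i \<subseteq> R (Suc i)" for i
    unfolding R_def \<theta>_def using threshold_Suc_le[of \<epsilon> c i] assms(1,2,5) c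
    by (intro H_component_rel_antimono) simp
  obtain i where "i \<le> l" and stable: "R i = R (Suc i)"
    using increasing_equiv_chain_stabilises[of P' R, OF finite equiv chain] unfolding l_def .
  have bounds: "\<epsilon> * (\<epsilon> * c) ^ 2 ^ l \<le> \<theta> i" "\<theta> i \<le> \<epsilon>"
    unfolding \<theta>_def using threshold_bounds \<open>i \<le> l\<close> assms(1,2) c by auto
  have "good_coarsening \<epsilon> \<alpha> \<beta> V E (Union ` (P' // R i)) P'"
    unfolding R_def
  proof (intro good_coarsening_H_components[OF assms(7) finite])
    show "H_component_rel E P' (\<theta> (Suc i) * \<beta>) \<subseteq> H_component_rel E P' (\<theta> i * \<beta>)"
      using stable by (simp add: R_def)
    show "(real (card P'))\<^sup>2 * \<theta> (Suc i) \<le> (\<theta> i)\<^sup>2 * \<alpha>"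
      using scaled_threshold_Suc_le assms(3) by (simp add: \<theta>_def c_def l_def)
    show "0 \<le> \<theta> (Suc i)"
      using threshold_nonneg assms(1) c(1) by (simp add: \<theta>_def)
  qed (use bounds assms(5) in \<open>simp_all add: c_def l_def\<close>)
  then show ?thesis ..
qed

end
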